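(* Let $S$ be a commutative ring, $X=\begin{pmatrix}a&b\\c&a\end{pmatrix}\in R=\mathbb{M}_2(S)$, and assume $bS+cS=rS$ for some $r\in S$. Then $$\{-\det[X,Y]: Y\in R\}=V[r^2,-bc].$$ If $b,c$ are coprime in $S$ (i.e. $bS+cS=S$), this set equals $V[1,-bc]$.
   Context: $[X,Y]=XY-YX$. For $s,\delta\in S$, $V[s,\delta]=\{s r_1^2+\delta r_2^2 : r_1,r_2\in S\}$. *)

theory Defs
  imports "HOL-Analysis.Analysis"
begin

text \<open>2x2 matrices over a commutative ring S are modelled as S^2^2
  (rows indexed by the type 2); the entries of mat2 a b c d are
  row 1 = (a, b), row 2 = (c, d).\<close>

definition mat2 :: "'a::comm_ring_1 \<Rightarrow> 'a \<Rightarrow> 'a \<Rightarrow> 'a \<Rightarrow> 'a^2^2" where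
  "mat2 a b c d = (\<chi> i j. if i = 1 then (if j = 1 then a else b) else (if j = 1 then c else d))"

definition commutator :: "'a::comm_ring_1^2^2 \<Rightarrow> 'a^2^2 \<Rightarrow> 'a^2^2" where
  "commutator X Y = X ** Y - Y ** X"

definition V :: "'a::comm_ring_1 \<Rightarrow> 'a \<Rightarrow> 'a set" where
  "V s \<delta> = {s * r1^2 + \<delta> * r2^2 | r1 r2. True}"

end

theory Submission
  imports Defs
begin

(* For X = mat2 a b c a and an arbitrary Y = (y_ij) a direct
   computation gives
       - det [X, Y] = (b*y21 - c*y12)^2 - b*c*(y22 - y11)^2 .
   As Y ranges over all matrices, b*y21 - c*y12 ranges over the whole ideal
   bS + cS and y22 - y11 independently over all of S; so the set of values
   of - det [X, Y] is { p^2 - b*c*t^2 | p in bS + cS, t in S }. *)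

lemma mat2_entries:
  "(mat2 a b c d)$1$1 = a" "(mat2 a b c d)$1$2 = b"
  "(mat2 a b c d)$2$1 = c" "(mat2 a b c d)$2$2 = d"
  by (simp_all add: mat2_def)

lemma neg_det_commutator_mat2:
  fixes a b c :: "'a::comm_ring_1"
  shows "- det (commutator (mat2 a b c a) Y)
           = (b * Y$2$1 - c * Y$1$2)^2 - b * c * (Y$2$2 - Y$1$1)^2"
  by (simp add: det_2 commutator_def mat2_def matrix_matrix_mult_def sum_2
                power2_eq_square algebra_simps)

(* The values of - det [X, Y] are exactly p^2 - bc t^2 with p in the ideal
   bS + cS and t arbitrary: both p and t can be prescribed independently. *)
lemma neg_det_commutator_values:
  fixes a b c :: "'a::comm_ring_1"
  shows "{- det (commutator (mat2 a b c a) Y) | Y. True}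
           = {p^2 - b * c * t^2 | p t. p \<in> {b * x + c * y | x y. True}}"
proof (rule set_eqI, rule iffI)
  fix v assume "v \<in> {- det (commutator (mat2 a b c a) Y) | Y. True}"
  then obtain Y where v: "v = - det (commutator (mat2 a b c a) Y)" by blast
  have ideal: "b * Y$2$1 - c * Y$1$2 \<in> {b * x + c * y | x y. True}"
    by (rule CollectI, rule exI[of _ "Y$2$1"], rule exI[of _ "- Y$1$2"]) simp
  show "v \<in> {p^2 - b * c * t^2 | p t. p \<in> {b * x + c * y | x y. True}}"
    using ideal unfolding v neg_det_commutator_mat2 by blast
next
  fix v assume "v \<in> {p^2 - b * c * t^2 | p t. p \<in> {b * x + c * y | x y. True}}"
  then obtain x y t where v: "v = (b * x + c * y)^2 - b * c * t^2" by blast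
  have "v = - det (commutator (mat2 a b c a) (mat2 0 (- y) x t))"
    unfolding neg_det_commutator_mat2 mat2_entries v by simp
  then show "v \<in> {- det (commutator (mat2 a b c a) Y) | Y. True}" by blast
qed

lemma principal_square_values:
  fixes r \<delta> :: "'a::comm_ring_1"
  assumes "I = {r * z | z. True}"
  shows "{p^2 + \<delta> * t^2 | p t. p \<in> I} = V (r^2) \<delta>"
proof (rule set_eqI, rule iffI)
  fix v assume "v \<in> {p^2 + \<delta> * t^2 | p t. p \<in> I}"
  then obtain z t where "v = (r * z)^2 + \<delta> * t^2" using assms by blast
  then show "v \<in> V (r^2) \<delta>" unfolding V_def by (auto simp: power_mult_distrib)
next
  fix v assume "v \<in> V (r^2) \<delta>"
  then obtain z t where "v = r^2 * z^2 + \<delta> * t^2" unfolding V_def by blast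
  then have "v = (r * z)^2 + \<delta> * t^2" by (simp add: power_mult_distrib)
  then show "v \<in> {p^2 + \<delta> * t^2 | p t. p \<in> I}" using assms by blast
qed

theorem proposition5p16:
  fixes a b c :: "'a::comm_ring_1"
  shows "(\<forall>r. {b * x + c * y | x y. True} = {r * z | z. True} \<longrightarrow>
            {- det (commutator (mat2 a b c a) Y) | Y. True} = V (r^2) (- (b * c))) \<and>
         ({b * x + c * y | x y. True} = UNIV \<longrightarrow>
            {- det (commutator (mat2 a b c a) Y) | Y. True} = V 1 (- (b * c)))"
proof -
  let ?I = "{b * x + c * y | x y. True}"
  have value_set: "{- det (commutator (mat2 a b c a) Y) | Y. True}
                  = {p^2 + (- (b * c)) * t^2 | p t. p \<in> ?I}"
    unfolding neg_det_commutator_values by simp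
  have principal: "{- det (commutator (mat2 a b c a) Y) | Y. True} = V (r^2) (- (b * c))"
    if "?I = {r * z | z. True}" for r
    unfolding value_set by (rule principal_square_values[OF that])
  moreover have "{- det (commutator (mat2 a b c a) Y) | Y. True} = V 1 (- (b * c))"
    if "?I = UNIV"
  proof -
    have "?I = {1 * z | z. True}" using that by simp
    from principal[OF this] show ?thesis by simp
  qed
  ultimately show ?thesis by blast
qed

end
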